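(* Let $S$ be a group and $A,B$ left $S$-acts without zero subacts. Then: (i) $A$ and $B\amalg z$ are not geometrically equivalent; (ii) $A$ and $B\amalg(z_1\amalg z_2)$ are not geometrically equivalent.
   Context: A left $S$-act is a nonempty set with an action $S\times A\to A$ satisfying $1a=a$, $(st)a=s(ta)$; homomorphisms preserve the action; $\amalg$ denotes coproduct (disjoint union). A zero $S$-act is a one-element $S$-act; $z,z_1,z_2$ denote zero $S$-acts. A zero subact is a one-element subact. For a nonempty finite set $X$, $F_X=\coprod_{x\in X}S_x$ is the free $S$-act on $X$. For an $S$-act $G$ and a relation $T\subseteq F_X\times F_X$, $T'_G=\{\mu:F_X\to G \text{ homomorphism}: T\subseteq\ker\mu\}$ and $T''_G=\bigcap_{\mu\in T'_G}\ker\mu$ (empty intersection $=F_X\times F_X$). $S$-acts $G_1,G_2$ are geometrically equivalent iff $T''_{G_1}=T''_{G_2}$ for all nonempty finite $X$ and all $T\subseteq F_X\times F_X$. *)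

theory Defs
  imports "HOL-Algebra.Group"
begin

definition s_act :: "('s,'m) monoid_scheme \<Rightarrow> 'b set \<Rightarrow> ('s \<Rightarrow> 'b \<Rightarrow> 'b) \<Rightarrow> bool" where
  "s_act S A act \<longleftrightarrow> A \<noteq> {}
     \<and> (\<forall>s\<in>carrier S. \<forall>a\<in>A. act s a \<in> A)
     \<and> (\<forall>a\<in>A. act \<one>\<^bsub>S\<^esub> a = a)
     \<and> (\<forall>s\<in>carrier S. \<forall>t\<in>carrier S. \<forall>a\<in>A. act (s \<otimes>\<^bsub>S\<^esub> t) a = act s (act t a))"

definition zero_act :: "('s,'m) monoid_scheme \<Rightarrow> 'b set \<Rightarrow> ('s \<Rightarrow> 'b \<Rightarrow> 'b) \<Rightarrow> bool" where
  "zero_act S Z act \<longleftrightarrow> s_act S Z act \<and> (\<exists>z. Z = {z})"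

definition has_zero_subact :: "('s,'m) monoid_scheme \<Rightarrow> 'b set \<Rightarrow> ('s \<Rightarrow> 'b \<Rightarrow> 'b) \<Rightarrow> bool" where
  "has_zero_subact S A act \<longleftrightarrow> (\<exists>a\<in>A. \<forall>s\<in>carrier S. act s a \<in> {a})"

definition coprod_carrier :: "'a set \<Rightarrow> 'b set \<Rightarrow> ('a + 'b) set" where
  "coprod_carrier A B = Inl ` A \<union> Inr ` B"

definition coprod_act :: "('s \<Rightarrow> 'a \<Rightarrow> 'a) \<Rightarrow> ('s \<Rightarrow> 'b \<Rightarrow> 'b) \<Rightarrow> 's \<Rightarrow> 'a + 'b \<Rightarrow> 'a + 'b" where
  "coprod_act actA actB s p = (case p of Inl a \<Rightarrow> Inl (actA s a) | Inr b \<Rightarrow> Inr (actB s b))"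

text \<open>Free S-act on X: the coproduct of copies S_x, i.e. X \<times> S with t(x,s) = (x, ts).\<close>
definition free_carrier :: "('s,'m) monoid_scheme \<Rightarrow> 'x set \<Rightarrow> ('x \<times> 's) set" where
  "free_carrier S X = X \<times> carrier S"

definition free_act :: "('s,'m) monoid_scheme \<Rightarrow> 's \<Rightarrow> 'x \<times> 's \<Rightarrow> 'x \<times> 's" where
  "free_act S t p = (fst p, t \<otimes>\<^bsub>S\<^esub> snd p)"

definition act_hom :: "('s,'m) monoid_scheme \<Rightarrow> 'a set \<Rightarrow> ('s \<Rightarrow> 'a \<Rightarrow> 'a)
    \<Rightarrow> 'b set \<Rightarrow> ('s \<Rightarrow> 'b \<Rightarrow> 'b) \<Rightarrow> ('a \<Rightarrow> 'b) \<Rightarrow> bool" where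
  "act_hom S A actA B actB f \<longleftrightarrow> (\<forall>a\<in>A. f a \<in> B)
     \<and> (\<forall>t\<in>carrier S. \<forall>a\<in>A. f (actA t a) = actB t (f a))"

definition act_ker :: "'a set \<Rightarrow> ('a \<Rightarrow> 'b) \<Rightarrow> ('a \<times> 'a) set" where
  "act_ker A f = {(p, q). p \<in> A \<and> q \<in> A \<and> f p = f q}"

definition T_prime :: "('s,'m) monoid_scheme \<Rightarrow> 'x set \<Rightarrow> 'g set \<Rightarrow> ('s \<Rightarrow> 'g \<Rightarrow> 'g)
    \<Rightarrow> (('x \<times> 's) \<times> ('x \<times> 's)) set \<Rightarrow> (('x \<times> 's) \<Rightarrow> 'g) set" where
  "T_prime S X G actG T = {\<mu>. act_hom S (free_carrier S X) (free_act S) G actG \<mu>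
                              \<and> T \<subseteq> act_ker (free_carrier S X) \<mu>}"

text \<open>T''_G: intersection of the kernels (empty intersection = F_X \<times> F_X).\<close>
definition T_dprime :: "('s,'m) monoid_scheme \<Rightarrow> 'x set \<Rightarrow> 'g set \<Rightarrow> ('s \<Rightarrow> 'g \<Rightarrow> 'g)
    \<Rightarrow> (('x \<times> 's) \<times> ('x \<times> 's)) set \<Rightarrow> (('x \<times> 's) \<times> ('x \<times> 's)) set" where
  "T_dprime S X G actG T = (free_carrier S X \<times> free_carrier S X)
      \<inter> (\<Inter>\<mu>\<in>T_prime S X G actG T. act_ker (free_carrier S X) \<mu>)"

text \<open>Geometric equivalence; finite sets X are taken as finite sets of naturals
  (only the cardinality of X matters).\<close>
definition geom_equiv :: "('s,'m) monoid_scheme \<Rightarrow> 'a set \<Rightarrow> ('s \<Rightarrow> 'a \<Rightarrow> 'a)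
    \<Rightarrow> 'b set \<Rightarrow> ('s \<Rightarrow> 'b \<Rightarrow> 'b) \<Rightarrow> bool" where
  "geom_equiv S G1 act1 G2 act2 \<longleftrightarrow>
    (\<forall>X :: nat set. finite X \<and> X \<noteq> {} \<longrightarrow>
      (\<forall>T. T \<subseteq> free_carrier S X \<times> free_carrier S X \<longrightarrow>
         T_dprime S X G1 act1 T = T_dprime S X G2 act2 T))"

end

theory Submission
  imports Defs
begin

text \<open>A homomorphism from the free act identifying \<open>(0, \<one>)\<close> with every \<open>(0, s)\<close> sends
  \<open>(0, \<one>)\<close> to a fixed point of the action. An act \<open>A\<close> without zero subact has none, so
  for this relation \<open>T'\<^sub>A\<close> is empty and \<open>T''\<^sub>A\<close> is everything. An act containing a fixed point
  \<open>z\<close> and a further point \<open>w\<close> admits the homomorphism sending the generators \<open>0, 1\<close> to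
  \<open>z, w\<close>, which separates \<open>(0, \<one>)\<close> from \<open>(1, \<one>)\<close>; both \<open>B \<amalg> z\<close> and
  \<open>B \<amalg> (z\<^sub>1 \<amalg> z\<^sub>2)\<close> are such acts.\<close>

lemma coprod_s_act:
  assumes "s_act S A actA" "s_act S B actB"
  shows "s_act S (coprod_carrier A B) (coprod_act actA actB)"
  using assms unfolding s_act_def coprod_carrier_def coprod_act_def by auto

lemma T_dprime_eq_full_if_T_prime_empty:
  assumes "T_prime S X G actG T = {}"
  shows "T_dprime S X G actG T = free_carrier S X \<times> free_carrier S X"
  using assms unfolding T_dprime_def by simp

lemma act_hom_free_extension:
  assumes "monoid S" "s_act S G actG" "g ` X \<subseteq> G"
  shows "act_hom S (free_carrier S X) (free_act S) G actG (\<lambda>(x, s). actG s (g x))"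
  using assms unfolding act_hom_def s_act_def free_carrier_def free_act_def
  by (auto simp: image_subset_iff)

definition stabilizer_relation :: "('s,'m) monoid_scheme \<Rightarrow> ((nat \<times> 's) \<times> (nat \<times> 's)) set" where
  "stabilizer_relation S = {((0, \<one>\<^bsub>S\<^esub>), (0, s)) | s. s \<in> carrier S}"

lemma stabilizer_relation_subset:
  assumes "monoid S" "0 \<in> X"
  shows "stabilizer_relation S \<subseteq> free_carrier S X \<times> free_carrier S X"
  using assms unfolding stabilizer_relation_def free_carrier_def by auto

lemma T_prime_stabilizer_relation_empty:
  assumes "monoid S" "0 \<in> X" and no_zero: "\<not> has_zero_subact S A actA"
  shows "T_prime S X A actA (stabilizer_relation S) = {}"
proof (rule ccontr)
  assume "T_prime S X A actA (stabilizer_relation S) \<noteq> {}"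
  then obtain \<mu> where hom: "act_hom S (free_carrier S X) (free_act S) A actA \<mu>"
    and ker: "stabilizer_relation S \<subseteq> act_ker (free_carrier S X) \<mu>"
    unfolding T_prime_def by blast
  have one: "\<one>\<^bsub>S\<^esub> \<in> carrier S" using \<open>monoid S\<close> by (rule monoid.one_closed)
  have gen: "(0, \<one>\<^bsub>S\<^esub>) \<in> free_carrier S X"
    using one \<open>0 \<in> X\<close> unfolding free_carrier_def by simp
  let ?a = "\<mu> (0, \<one>\<^bsub>S\<^esub>)"
  have "actA s ?a = ?a" if s: "s \<in> carrier S" for s
  proof -
    have "actA s ?a = \<mu> (free_act S s (0, \<one>\<^bsub>S\<^esub>))"
      using hom gen s unfolding act_hom_def by simp
    also have "\<dots> = \<mu> (0, s)"
      using \<open>monoid S\<close> s unfolding free_act_def by (simp add: monoid.r_one)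
    also have "\<dots> = ?a"
      using ker s unfolding stabilizer_relation_def act_ker_def by auto
    finally show ?thesis .
  qed
  moreover have "?a \<in> A" using hom gen unfolding act_hom_def by blast
  ultimately show False using no_zero unfolding has_zero_subact_def by auto
qed

lemma not_geom_equiv_if_fixed_point:
  assumes "monoid S"
    and "\<not> has_zero_subact S A actA"
    and G: "s_act S G actG"
    and z: "z \<in> G" "\<forall>s\<in>carrier S. actG s z = z"
    and w: "w \<in> G" "w \<noteq> z"
  shows "\<not> geom_equiv S A actA G actG"
proof
  assume equiv: "geom_equiv S A actA G actG"
  define X :: "nat set" where "X = {0, 1}"
  define T where "T = stabilizer_relation S"
  define p where "p = ((0 :: nat, \<one>\<^bsub>S\<^esub>), (1 :: nat, \<one>\<^bsub>S\<^esub>))"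
  define \<mu> where "\<mu> = (\<lambda>(x :: nat, s). actG s (if x = 0 then z else w))"
  have one: "\<one>\<^bsub>S\<^esub> \<in> carrier S" using \<open>monoid S\<close> by (rule monoid.one_closed)
  have "T \<subseteq> free_carrier S X \<times> free_carrier S X"
    using stabilizer_relation_subset[OF \<open>monoid S\<close>] unfolding T_def X_def by simp
  then have eq: "T_dprime S X A actA T = T_dprime S X G actG T"
    using equiv unfolding geom_equiv_def X_def by simp
  have "p \<in> T_dprime S X A actA T"
    using T_dprime_eq_full_if_T_prime_empty[OF
        T_prime_stabilizer_relation_empty[OF \<open>monoid S\<close> _ assms(2)]] one
    unfolding T_def X_def p_def free_carrier_def by simp
  then have p_G: "p \<in> T_dprime S X G actG T" using eq by simp
  have "act_hom S (free_carrier S X) (free_act S) G actG \<mu>"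
    using act_hom_free_extension[OF \<open>monoid S\<close> G, of "\<lambda>x. if x = 0 then z else w" X] z w
    unfolding \<mu>_def by auto
  moreover have "T \<subseteq> act_ker (free_carrier S X) \<mu>"
    using one z unfolding T_def stabilizer_relation_def act_ker_def \<mu>_def X_def free_carrier_def
    by auto
  ultimately have "\<mu> \<in> T_prime S X G actG T" unfolding T_prime_def by simp
  with p_G have "\<mu> (0, \<one>\<^bsub>S\<^esub>) = \<mu> (1, \<one>\<^bsub>S\<^esub>)"
    unfolding T_dprime_def act_ker_def p_def by blast
  moreover have "\<mu> (0, \<one>\<^bsub>S\<^esub>) \<noteq> \<mu> (1, \<one>\<^bsub>S\<^esub>)"
    using G z w one unfolding \<mu>_def s_act_def by auto
  ultimately show False by simp
qed

lemma not_geom_equiv_coprod_zero_act: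
  assumes "monoid S"
    and "\<not> has_zero_subact S A actA"
    and "s_act S B actB" and "s_act S Z actZ" and "z \<in> Z" "\<forall>s\<in>carrier S. actZ s z = z"
  shows "\<not> geom_equiv S A actA (coprod_carrier B Z) (coprod_act actB actZ)"
proof -
  obtain b where "b \<in> B" using \<open>s_act S B actB\<close> unfolding s_act_def by blast
  show ?thesis
  proof (rule not_geom_equiv_if_fixed_point[OF assms(1,2) coprod_s_act[OF assms(3,4)]])
    show "Inl b \<in> coprod_carrier B Z" "Inl b \<noteq> Inr z"
      using \<open>b \<in> B\<close> unfolding coprod_carrier_def by simp_all
    show "Inr z \<in> coprod_carrier B Z" "\<forall>s\<in>carrier S. coprod_act actB actZ s (Inr z) = Inr z"
      using assms(5,6) unfolding coprod_carrier_def coprod_act_def by simp_all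
  qed
qed

lemma zero_act_fixed_point:
  assumes "zero_act S Z actZ" "z \<in> Z"
  shows "\<forall>s\<in>carrier S. actZ s z = z"
  using assms unfolding zero_act_def s_act_def by blast

theorem proposition3p17:
  fixes S :: "('s,'m) monoid_scheme"
    and A :: "'a set" and actA :: "'s \<Rightarrow> 'a \<Rightarrow> 'a"
    and B :: "'b set" and actB :: "'s \<Rightarrow> 'b \<Rightarrow> 'b"
    and Z :: "'z set" and actZ :: "'s \<Rightarrow> 'z \<Rightarrow> 'z"
    and Z1 :: "'c set" and actZ1 :: "'s \<Rightarrow> 'c \<Rightarrow> 'c"
    and Z2 :: "'d set" and actZ2 :: "'s \<Rightarrow> 'd \<Rightarrow> 'd"
  assumes "group S"
    and "s_act S A actA" and "\<not> has_zero_subact S A actA"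
    and "s_act S B actB" and "\<not> has_zero_subact S B actB"
    and "zero_act S Z actZ" and "zero_act S Z1 actZ1" and "zero_act S Z2 actZ2"
  shows "\<not> geom_equiv S A actA (coprod_carrier B Z) (coprod_act actB actZ)
       \<and> \<not> geom_equiv S A actA (coprod_carrier B (coprod_carrier Z1 Z2))
             (coprod_act actB (coprod_act actZ1 actZ2))"
proof
  have mon: "monoid S" using \<open>group S\<close> by (rule group.is_monoid)
  have acts: "s_act S Z actZ" "s_act S Z1 actZ1" "s_act S Z2 actZ2"
    using assms(6-8) unfolding zero_act_def by simp_all
  obtain z where z: "z \<in> Z" using \<open>zero_act S Z actZ\<close> unfolding zero_act_def by blast
  show "\<not> geom_equiv S A actA (coprod_carrier B Z) (coprod_act actB actZ)"
    using not_geom_equiv_coprod_zero_act[OF mon assms(3,4) acts(1) z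
        zero_act_fixed_point[OF assms(6) z]] .
  obtain z1 where z1: "z1 \<in> Z1" using \<open>zero_act S Z1 actZ1\<close> unfolding zero_act_def by blast
  have "Inl z1 \<in> coprod_carrier Z1 Z2"
    and "\<forall>s\<in>carrier S. coprod_act actZ1 actZ2 s (Inl z1) = Inl z1"
    using z1 zero_act_fixed_point[OF assms(7) z1]
    unfolding coprod_carrier_def coprod_act_def by simp_all
  then show "\<not> geom_equiv S A actA (coprod_carrier B (coprod_carrier Z1 Z2))
             (coprod_act actB (coprod_act actZ1 actZ2))"
    by (rule not_geom_equiv_coprod_zero_act[OF mon assms(3,4) coprod_s_act[OF acts(2,3)]])
qed

end
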